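(* Let $M$ be a $*$-left Ehresmann monoid and $H\subseteq M$ an atomic subset. Then $H$ is proper if and only if for all $h,k\in H$: $h\,\sigma\,k$ holds exactly when $hk^*=kh^*$.
   Context: A $*$-left Ehresmann monoid is a monoid $M$ with unary operations $+,*$ such that $x^+x=x$, $(x^+y^+)^+=x^+y^+$, $x^+y^+=y^+x^+$, $(xy)^+=(xy^+)^+$, $xx^*=x$, $(x^* )^*=x^*$, $x^*y^*=y^*x^*$, $(xy^* )^*y^*=(xy^* )^*$, $(x^* )^+=x^*$, $(x^+)^*=x^+$. Its semilattice of projections is $E=\{a^+\}=\{a^*\}$ (ordered by $e\le f$ iff $ef=e$); $\sigma$ is the least monoid congruence on $M$ containing $E\times E$. $H\subseteq M$ is atomic if: (H1) $E\subseteq H$; (H2) $h\in H,e\in E$ imply $he\in H$ and $(he)^*=h^*e$; (H3) if $h\in H$, $k\in H\setminus E$, $h^*\ge k^+$ then $hk\in H$ and $(hk)^*=k^*$; (H4) every $m\in M$ is $\sigma$-related to some $h\in H$; (H5) if $h,k,w\in H$, $hk\,\sigma\,w$ and $k^*=w^*$, then some $u\in H$ has $u\,\sigma\,h$ and $u^*\ge k^+$. $H$ is proper if for all $h,k\in H$: ($h^*=k^*$ and $h\,\sigma\,k$) iff $h=k$. *)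

theory Defs
  imports Main
begin

definition star_left_ehresmann :: "('a::monoid_mult \<Rightarrow> 'a) \<Rightarrow> ('a \<Rightarrow> 'a) \<Rightarrow> bool" where
  "star_left_ehresmann pl st \<longleftrightarrow>
     (\<forall>x. pl x * x = x) \<and>
     (\<forall>x y. pl (pl x * pl y) = pl x * pl y) \<and>
     (\<forall>x y. pl x * pl y = pl y * pl x) \<and>
     (\<forall>x y. pl (x * y) = pl (x * pl y)) \<and>
     (\<forall>x. x * st x = x) \<and>
     (\<forall>x. st (st x) = st x) \<and>
     (\<forall>x y. st x * st y = st y * st x) \<and>
     (\<forall>x y. st (x * st y) * st y = st (x * st y)) \<and>
     (\<forall>x. pl (st x) = st x) \<and>
     (\<forall>x. st (pl x) = pl x)"

text \<open>Semilattice of projections E = {a^+} (which equals {a^*}).\<close>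
definition projections :: "('a::monoid_mult \<Rightarrow> 'a) \<Rightarrow> 'a set" where
  "projections pl = range pl"

definition proj_le :: "'a::monoid_mult \<Rightarrow> 'a \<Rightarrow> bool" where
  "proj_le e f \<longleftrightarrow> e * f = e"

definition monoid_congruence :: "('a::monoid_mult \<times> 'a) set \<Rightarrow> bool" where
  "monoid_congruence R \<longleftrightarrow> equiv UNIV R \<and>
     (\<forall>a b c d. (a, b) \<in> R \<longrightarrow> (c, d) \<in> R \<longrightarrow> (a * c, b * d) \<in> R)"

definition sigma :: "('a::monoid_mult \<Rightarrow> 'a) \<Rightarrow> ('a \<times> 'a) set" where
  "sigma pl = \<Inter>{R. monoid_congruence R \<and> projections pl \<times> projections pl \<subseteq> R}"

definition atomic :: "('a::monoid_mult \<Rightarrow> 'a) \<Rightarrow> ('a \<Rightarrow> 'a) \<Rightarrow> 'a set \<Rightarrow> bool" where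
  "atomic pl st H \<longleftrightarrow>
     projections pl \<subseteq> H \<and>
     (\<forall>h\<in>H. \<forall>e\<in>projections pl. h * e \<in> H \<and> st (h * e) = st h * e) \<and>
     (\<forall>h\<in>H. \<forall>k\<in>H - projections pl. proj_le (pl k) (st h) \<longrightarrow>
         h * k \<in> H \<and> st (h * k) = st k) \<and>
     (\<forall>m. \<exists>h\<in>H. (m, h) \<in> sigma pl) \<and>
     (\<forall>h\<in>H. \<forall>k\<in>H. \<forall>w\<in>H. (h * k, w) \<in> sigma pl \<longrightarrow> st k = st w \<longrightarrow>
         (\<exists>u\<in>H. (u, h) \<in> sigma pl \<and> proj_le (pl k) (st u)))"

definition proper :: "('a::monoid_mult \<Rightarrow> 'a) \<Rightarrow> ('a \<Rightarrow> 'a) \<Rightarrow> 'a set \<Rightarrow> bool" where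
  "proper pl st H \<longleftrightarrow>
     (\<forall>h\<in>H. \<forall>k\<in>H. (st h = st k \<and> (h, k) \<in> sigma pl) \<longleftrightarrow> h = k)"

end

theory Submission
  imports Defs
begin

text \<open>Right multiplication by a projection does not change the \<sigma>-class, so \<open>h k\<^sup>* = k h\<^sup>*\<close>
  always forces \<open>h \<sigma> k\<close>. If \<open>H\<close> is proper and \<open>h \<sigma> k\<close>, then by (H2) \<open>h k\<^sup>*\<close> and \<open>k h\<^sup>*\<close> lie in \<open>H\<close>,
  are \<sigma>-related and both have star \<open>h\<^sup>* k\<^sup>*\<close>, hence coincide. Conversely, if \<sigma> on \<open>H\<close> is
  given by \<open>h k\<^sup>* = k h\<^sup>*\<close>, then \<sigma>-related elements with \<open>h\<^sup>* = k\<^sup>*\<close> satisfy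
  \<open>h = h h\<^sup>* = h k\<^sup>* = k h\<^sup>* = k k\<^sup>* = k\<close>.\<close>

lemma equiv_Inter:
  assumes "\<And>R. R \<in> \<R> \<Longrightarrow> equiv A R" and "\<R> \<noteq> {}"
  shows "equiv A (\<Inter>\<R>)"
proof (rule equivI)
  show "\<Inter>\<R> \<subseteq> A \<times> A" using assms by (auto dest: equiv_type)
  show "refl_on A (\<Inter>\<R>)" using assms by (auto simp: equiv_def refl_on_def)
  show "sym (\<Inter>\<R>)" using assms by (auto simp: equiv_def sym_def)
  show "trans (\<Inter>\<R>)" using assms unfolding equiv_def trans_def by blast
qed

lemma monoid_congruence_UNIV: "monoid_congruence UNIV"
  by (simp add: monoid_congruence_def equiv_def refl_on_def sym_def trans_def)

lemma monoid_congruence_Inter: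
  assumes "\<And>R. R \<in> \<R> \<Longrightarrow> monoid_congruence R" and "\<R> \<noteq> {}"
  shows "monoid_congruence (\<Inter>\<R>)"
proof -
  have "equiv UNIV (\<Inter>\<R>)"
    using assms equiv_Inter unfolding monoid_congruence_def by blast
  moreover have "(a * c, b * d) \<in> \<Inter>\<R>" if "(a, b) \<in> \<Inter>\<R>" "(c, d) \<in> \<Inter>\<R>" for a b c d
    using assms(1) that unfolding monoid_congruence_def by blast
  ultimately show ?thesis
    unfolding monoid_congruence_def by blast
qed

lemma monoid_congruence_sigma: "monoid_congruence (sigma pl)"
  unfolding sigma_def using monoid_congruence_UNIV by (intro monoid_congruence_Inter) auto

lemma equiv_sigma: "equiv UNIV (sigma pl)"
  using monoid_congruence_sigma unfolding monoid_congruence_def by blast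

lemma sigma_refl: "(a, a) \<in> sigma pl"
  using equiv_sigma by (metis UNIV_I equivE refl_onD)

lemma sigma_sym: "(a, b) \<in> sigma pl \<Longrightarrow> (b, a) \<in> sigma pl"
  using equiv_sigma by (metis equivE symD)

lemma sigma_trans: "(a, b) \<in> sigma pl \<Longrightarrow> (b, c) \<in> sigma pl \<Longrightarrow> (a, c) \<in> sigma pl"
  using equiv_sigma by (metis equivE transD)

lemma sigma_mult: "(a, b) \<in> sigma pl \<Longrightarrow> (c, d) \<in> sigma pl \<Longrightarrow> (a * c, b * d) \<in> sigma pl"
  using monoid_congruence_sigma unfolding monoid_congruence_def by blast

lemma sigma_projections: "e \<in> projections pl \<Longrightarrow> f \<in> projections pl \<Longrightarrow> (e, f) \<in> sigma pl"
  unfolding sigma_def by blast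

lemma star_left_ehresmannD:
  assumes "star_left_ehresmann pl st"
  shows "pl x * x = x" and "x * st x = x" and "st x * st y = st y * st x"
    and "pl (st x) = st x"
  using assms unfolding star_left_ehresmann_def by blast+

lemma one_in_projections:
  assumes "star_left_ehresmann pl st"
  shows "1 \<in> projections pl"
proof -
  have "pl 1 = 1"
    using star_left_ehresmannD(1)[OF assms, of 1] by simp
  then show ?thesis
    unfolding projections_def by (metis rangeI)
qed

lemma star_in_projections:
  assumes "star_left_ehresmann pl st"
  shows "st x \<in> projections pl"
  using star_left_ehresmannD(4)[OF assms] unfolding projections_def by (metis rangeI)

lemma mult_projection_sigma:
  assumes "star_left_ehresmann pl st" and "e \<in> projections pl"
  shows "(x * e, x) \<in> sigma pl"
proof -
  have "(e, 1) \<in> sigma pl"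
    using sigma_projections assms one_in_projections by blast
  then have "(x * e, x * 1) \<in> sigma pl"
    using sigma_mult sigma_refl by blast
  then show ?thesis by simp
qed

lemma sigma_if_mult_star_eq:
  assumes "star_left_ehresmann pl st" and "h * st k = k * st h"
  shows "(h, k) \<in> sigma pl"
proof -
  have "(h, h * st k) \<in> sigma pl"
    using mult_projection_sigma star_in_projections assms(1) by (blast intro: sigma_sym)
  moreover have "(k * st h, k) \<in> sigma pl"
    using mult_projection_sigma star_in_projections assms(1) by blast
  ultimately show ?thesis
    unfolding assms(2) by (rule sigma_trans)
qed

lemma atomic_mult_projection:
  assumes "atomic pl st H" and "h \<in> H" and "e \<in> projections pl"
  shows "h * e \<in> H" and "st (h * e) = st h * e"
  using assms unfolding atomic_def by blast+

lemma proper_sigma_imp_mult_star_eq: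
  assumes "star_left_ehresmann pl st" and "atomic pl st H" and "proper pl st H"
    and "h \<in> H" and "k \<in> H" and "(h, k) \<in> sigma pl"
  shows "h * st k = k * st h"
proof -
  have in_H: "h * st k \<in> H" "k * st h \<in> H"
    using atomic_mult_projection(1) star_in_projections assms by blast+
  have "st (h * st k) = st h * st k" "st (k * st h) = st k * st h"
    using atomic_mult_projection(2) star_in_projections assms by blast+
  then have same_star: "st (h * st k) = st (k * st h)"
    using star_left_ehresmannD(3)[OF assms(1)] by simp
  have "(h * st k, h) \<in> sigma pl" "(k, k * st h) \<in> sigma pl"
    using mult_projection_sigma star_in_projections assms(1) by (blast intro: sigma_sym)+
  then have "(h * st k, k * st h) \<in> sigma pl"
    using assms(6) by (blast intro: sigma_trans)
  with in_H same_star assms(3) show ?thesis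
    unfolding proper_def by blast
qed

lemma eq_if_star_eq_and_mult_star_eq:
  assumes "star_left_ehresmann pl st" and "st h = st k" and "h * st k = k * st h"
  shows "h = k"
  using star_left_ehresmannD(2)[OF assms(1)] assms(2,3) by metis

theorem mainTheorem6:
  fixes pl st :: "'a::monoid_mult \<Rightarrow> 'a" and H :: "'a set"
  assumes "star_left_ehresmann pl st"
    and "atomic pl st H"
  shows "proper pl st H \<longleftrightarrow>
    (\<forall>h\<in>H. \<forall>k\<in>H. (h, k) \<in> sigma pl \<longleftrightarrow> h * st k = k * st h)"
proof
  assume "proper pl st H"
  then show "\<forall>h\<in>H. \<forall>k\<in>H. (h, k) \<in> sigma pl \<longleftrightarrow> h * st k = k * st h"
    using proper_sigma_imp_mult_star_eq sigma_if_mult_star_eq assms by blast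
next
  assume "\<forall>h\<in>H. \<forall>k\<in>H. (h, k) \<in> sigma pl \<longleftrightarrow> h * st k = k * st h"
  then show "proper pl st H"
    unfolding proper_def using eq_if_star_eq_and_mult_star_eq sigma_refl assms(1) by blast
qed

end
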